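(* Let $k\geq 2$ be an integer, let $\Omega_1,\Omega_2\subset\mathbb{C}$ be domains, and let $T$ map $\Omega_2$ conformally onto $\Omega_1$. Let $h=(T')^{(1-k)/2}$. Suppose that $\{f_1,\dotsc,f_k\}$ is a solution base of the differential equation \[ f^{(k)} + a_{k-2} f^{(k-2)} +a_{k-3} f^{(k-3)} + \dotsb + a_1 f' +a_0 f = 0, \] where the coefficients $a_0, \dotsc, a_{k-2}$ are analytic in $\Omega_1$. Then $\{(f_1 \circ T) h,\dotsc,(f_k \circ T) h \}$ is a solution base of a differential equation \[ g^{(k)} + b_{k-2} g^{(k-2)} +b_{k-3} g^{(k-3)} + \dotsb + b_1 g' +b_0 g = 0, \] whose coefficients $b_0,\dotsc, b_{k-2}$ are analytic in $\Omega_2$. Moreover, for any $\ell\in \{ 1, \dotsc, k-2\}$, \[ \begin{split} (a_\ell \circ T)(T')^{k-\ell} & = \sum_{j=\ell}^{k-1} b_j \left[ \sum_{i=\ell}^j \binom{j}{i} \, \frac{B_{i,\ell}\big( T', \dotsc, T^{(i-\ell+1)} \big)}{(T')^\ell} \, \frac{h^{(j-i)}}{h} \right]\\ & \qquad + \sum_{i=\ell}^{k-1} \binom{k}{i} \frac{B_{i,\ell}\big( T', \dotsc, T^{(i-\ell+1)} \big)}{(T')^\ell} \, \frac{h^{(k-i)}}{h} + \frac{B_{k,\ell}\big( T', \dotsc, T^{(k-\ell+1)} \big)}{(T')^\ell}, \end{split} \] (with the convention $b_{k-1}\equiv 0$), and \[ (a_0 \circ T) \, (T')^k = \frac{h^{(k)}}{h}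 + b_{k-2} \, \frac{h^{(k-2)}}{h} + \dotsb + b_1 \frac{h'}{h} + b_0 . \]
   Context: For integers $i\geq n\geq 1$, the incomplete exponential Bell polynomial is \[ B_{i,n}\big( z_1,\dotsc,z_{i-n+1} \big) = \sum \frac{i!}{j_1! \, j_2! \dotsb j_{i-n+1}!} \left( \frac{z_1}{1!} \right)^{j_1} \left( \frac{z_2}{2!} \right)^{j_2} \dotsb \left( \frac{z_{i-n+1}}{(i-n+1)!}\right)^{j_{i-n+1}}, \] where the sum is over all sequences $j_1,\dots,j_{i-n+1}$ of non-negative integers with $i = j_1 + 2 j_2 + \dotsb + (i-n+1) j_{i-n+1}$ and $n = j_1 + j_2 + \dotsb + j_{i-n+1}$. Here $h=(T')^{(1-k)/2}$ denotes an analytic branch of this power of the non-vanishing function $T'$. *)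

theory Defs
  imports "HOL-Complex_Analysis.Complex_Analysis"
begin

text \<open>The arguments are given as a function z indexed from 1; only z 1 .. z (i-n+1) are used.
  The summation ranges over sequences j_1,...,j_{i-n+1} (represented as functions
  nat => nat vanishing outside {1..i-n+1}).\<close>
definition bell_seqs :: "nat \<Rightarrow> nat \<Rightarrow> (nat \<Rightarrow> nat) set" where
  "bell_seqs i n = {js. (\<forall>m. m \<notin> {1..i-n+1} \<longrightarrow> js m = 0)
      \<and> (\<Sum>m=1..i-n+1. m * js m) = i \<and> (\<Sum>m=1..i-n+1. js m) = n}"

definition inc_bell :: "nat \<Rightarrow> nat \<Rightarrow> (nat \<Rightarrow> complex) \<Rightarrow> complex" where
  "inc_bell i n z = (\<Sum>js\<in>bell_seqs i n.
      of_nat (fact i) / of_nat (\<Prod>m=1..i-n+1. fact (js m))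
      * (\<Prod>m=1..i-n+1. (z m / of_nat (fact m)) ^ js m))"

definition solves_ode :: "complex set \<Rightarrow> nat \<Rightarrow> (nat \<Rightarrow> complex \<Rightarrow> complex)
    \<Rightarrow> (complex \<Rightarrow> complex) \<Rightarrow> bool" where
  "solves_ode \<Omega> k a f \<longleftrightarrow> f holomorphic_on \<Omega> \<and>
     (\<forall>z\<in>\<Omega>. (deriv ^^ k) f z + (\<Sum>j<k-1. a j z * (deriv ^^ j) f z) = 0)"

definition solution_base :: "complex set \<Rightarrow> nat \<Rightarrow> (nat \<Rightarrow> complex \<Rightarrow> complex)
    \<Rightarrow> (nat \<Rightarrow> complex \<Rightarrow> complex) \<Rightarrow> bool" where
  "solution_base \<Omega> k a fs \<longleftrightarrow>
     (\<forall>m\<in>{1..k}. solves_ode \<Omega> k a (fs m)) \<and>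
     (\<forall>c::nat \<Rightarrow> complex. (\<forall>z\<in>\<Omega>. (\<Sum>m=1..k. c m * fs m z) = 0) \<longrightarrow> (\<forall>m\<in>{1..k}. c m = 0)) \<and>
     (\<forall>g. solves_ode \<Omega> k a g \<longrightarrow>
        (\<exists>c::nat \<Rightarrow> complex. \<forall>z\<in>\<Omega>. g z = (\<Sum>m=1..k. c m * fs m z)))"

end

theory Submission
  imports Defs "HOL-Computational_Algebra.Formal_Power_Series"
begin

(* Put g = (f o T) h. Leibniz's rule and Faa di Bruno's formula give
   g^(j) = sum_l (f^(l) o T) C_(j,l) with C_(j,l) = sum_i binom(j,i) B_(i,l)(T', T'', ...) h^(j-i),
   a triangular array with diagonal C_(l,l) = T'^l h, which has no zeros. Hence the coefficients
   b_0, ..., b_(k-2) can be solved for, by back substitution, such that the operator with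
   coefficients b applied to g is T'^k h times the original operator applied to f; comparing the
   coefficients of f^(l) o T gives the stated identities after division by T'^l h. The coefficient
   of f^(k-1) o T needs no free parameter: differentiating h^2 T'^(k-1) = 1 shows C_(k,k-1) = 0.
   As T is biholomorphic and h has no zeros, f |-> (f o T) h maps the solution space of the first
   equation bijectively onto that of the second, so bases correspond.
   The Bell polynomials are handled through their exponential generating function, which agrees
   with the combinatorial definition by the multinomial theorem. *)

unbundle no vec_syntax

section \<open>Bell polynomials\<close>

lemma fps_power_nth_eq_0:
  fixes f :: "'a::comm_ring_1 fps"
  assumes "f $ 0 = 0" "n < k"
  shows "(f ^ k) $ n = 0"
proof (cases "f = 0")
  case False
  then have "subdegree f \<ge> 1" using assms(1) subdegree_eq_0_iff by (metis less_one not_le)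
  then have "n < k * subdegree f" using assms(2) by (metis less_le_trans mult_le_mono2 mult.right_neutral)
  then show ?thesis by (rule fps_pow_nth_below_subdegree)
qed (use assms in \<open>simp add: zero_power\<close>)

definition bell_series :: "(nat \<Rightarrow> 'a::field_char_0) \<Rightarrow> 'a fps" where
  "bell_series x = Abs_fps (\<lambda>m. if m = 0 then 0 else x m / fact m)"

definition bell_poly :: "nat \<Rightarrow> nat \<Rightarrow> (nat \<Rightarrow> 'a::field_char_0) \<Rightarrow> 'a" where
  "bell_poly n k x = fact n / fact k * (bell_series x ^ k) $ n"

lemma bell_series_nth_0 [simp]: "bell_series x $ 0 = 0"
  by (simp add: bell_series_def)

lemma bell_poly_0_right: "bell_poly n 0 x = (if n = 0 then 1 else 0)"
  by (simp add: bell_poly_def)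

lemma bell_poly_eq_0: "n < k \<Longrightarrow> bell_poly n k x = 0"
  by (simp add: bell_poly_def fps_power_nth_eq_0)

lemma bell_poly_Suc_Suc:
  "bell_poly (Suc n) (Suc k) x = (\<Sum>i\<le>n. of_nat (n choose i) * x (Suc i) * bell_poly (n - i) k x)"
proof -
  let ?Q = "bell_series x"
  have deriv_nth: "fps_deriv ?Q $ i = x (Suc i) / fact i" for i
    by (simp add: bell_series_def field_simps del: of_nat_Suc)
  have "of_nat (Suc n) * (?Q ^ Suc k) $ Suc n = fps_deriv (?Q ^ Suc k) $ n"
    by (simp only: fps_deriv_nth Suc_eq_plus1)
  also have "\<dots> = of_nat (Suc k) * (fps_deriv ?Q * ?Q ^ k) $ n"
    by (simp only: fps_deriv_power' diff_Suc_1 fps_of_nat[symmetric] mult.assoc fps_mult_left_const_nth)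
  also have "(fps_deriv ?Q * ?Q ^ k) $ n = (\<Sum>i\<le>n. x (Suc i) / fact i * (?Q ^ k) $ (n - i))"
    unfolding fps_mult_nth deriv_nth atLeast0AtMost ..
  finally have "bell_poly (Suc n) (Suc k) x = fact n / fact k * (\<Sum>i\<le>n. x (Suc i) / fact i * (?Q ^ k) $ (n - i))"
    by (simp add: bell_poly_def field_simps del: of_nat_Suc)
  also have "\<dots> = (\<Sum>i\<le>n. of_nat (n choose i) * x (Suc i) * bell_poly (n - i) k x)"
    unfolding sum_distrib_left
    by (intro sum.cong refl) (simp add: bell_poly_def binomial_fact field_simps)
  finally show ?thesis .
qed

lemma bell_poly_diag: "bell_poly n n x = x 1 ^ n"
proof (induction n)
  case (Suc n)
  have "bell_poly (Suc n) (Suc n) x = (\<Sum>i\<in>{0}. of_nat (n choose i) * x (Suc i) * bell_poly (n - i) n x)"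
    unfolding bell_poly_Suc_Suc by (rule sum.mono_neutral_right) (auto simp: bell_poly_eq_0)
  then show ?case using Suc by simp
qed (simp add: bell_poly_0_right)

lemma bell_poly_Suc_left_self:
  "bell_poly (Suc n) n x = of_nat (Suc n choose 2) * x 1 ^ (n - 1) * x 2"
proof (induction n)
  case (Suc n)
  have "bell_poly (Suc (Suc n)) (Suc n) x
      = (\<Sum>i\<in>{0,1}. of_nat (Suc n choose i) * x (Suc i) * bell_poly (Suc n - i) n x)"
    unfolding bell_poly_Suc_Suc by (rule sum.mono_neutral_right) (auto simp: bell_poly_eq_0)
  also have "\<dots> = x 1 * bell_poly (Suc n) n x + of_nat (Suc n) * x 2 * bell_poly n n x"
    by (simp add: numeral_2_eq_2)
  finally show ?case
    unfolding Suc bell_poly_diag by (cases n) (simp_all add: algebra_simps numeral_2_eq_2)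
qed (simp add: bell_poly_0_right)

lemma holomorphic_on_bell_poly:
  assumes "\<And>m. (\<lambda>z. x z m) holomorphic_on S"
  shows "(\<lambda>z. bell_poly n k (x z)) holomorphic_on S"
proof (induction k arbitrary: n)
  case (Suc k)
  then show ?case
    by (cases n) (simp_all add: bell_poly_eq_0 bell_poly_Suc_Suc holomorphic_on_sum holomorphic_on_mult assms)
qed (simp add: bell_poly_0_right)

definition partition_mults :: "nat \<Rightarrow> nat \<Rightarrow> nat \<Rightarrow> (nat \<Rightarrow> nat) set" where
  "partition_mults N k n = {js. (\<forall>m. m \<notin> {1..N} \<longrightarrow> js m = 0)
      \<and> (\<Sum>m=1..N. m * js m) = n \<and> (\<Sum>m=1..N. js m) = k}"

definition coeff_series :: "nat \<Rightarrow> (nat \<Rightarrow> 'a::comm_ring_1) \<Rightarrow> 'a fps" where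
  "coeff_series N y = (\<Sum>m=1..N. fps_const (y m) * fps_X ^ m)"

lemma bell_seqs_eq_partition_mults: "bell_seqs i n = partition_mults (i - n + 1) n i"
  unfolding bell_seqs_def partition_mults_def by auto

lemma finite_partition_mults: "finite (partition_mults N k n)"
proof (rule finite_subset)
  show "partition_mults N k n \<subseteq> (\<lambda>g m. if m \<in> {1..N} then g m else 0) ` PiE {1..N} (\<lambda>_. {0..k})"
  proof
    fix js assume js: "js \<in> partition_mults N k n"
    have "js m \<le> k" if "m \<in> {1..N}" for m
      using js member_le_sum[of m "{1..N}" js] that by (simp add: partition_mults_def)
    then have "restrict js {1..N} \<in> PiE {1..N} (\<lambda>_. {0..k})"
      by auto
    moreover have "js = (\<lambda>m. if m \<in> {1..N} then restrict js {1..N} m else 0)"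
      using js by (auto simp: partition_mults_def)
    ultimately show "js \<in> (\<lambda>g m. if m \<in> {1..N} then g m else 0) ` PiE {1..N} (\<lambda>_. {0..k})"
      by blast
  qed
qed (simp add: finite_PiE)

lemma partition_mults_0: "partition_mults 0 k n = (if k = 0 \<and> n = 0 then {\<lambda>_. 0} else {})"
  by (auto simp: partition_mults_def)

lemma bij_betw_partition_mults_Suc:
  "bij_betw (\<lambda>(r, js). js(Suc N := r))
     (SIGMA r:{r\<in>{..k}. Suc N * r \<le> n}. partition_mults N (k - r) (n - Suc N * r))
     (partition_mults (Suc N) k n)"
proof (rule bij_betw_byWitness[where f' = "\<lambda>js. (js (Suc N), js(Suc N := 0))"])
  have upd: "(\<Sum>m=1..N. m * (js(Suc N := r)) m) = (\<Sum>m=1..N. m * js m)"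
    "(\<Sum>m=1..N. (js(Suc N := r)) m) = (\<Sum>m=1..N. js m)" for js :: "nat \<Rightarrow> nat" and r
    by (auto intro: sum.cong)
  show "(\<lambda>(r, js). js(Suc N := r)) ` (SIGMA r:{r\<in>{..k}. Suc N * r \<le> n}. partition_mults N (k - r) (n - Suc N * r))
      \<subseteq> partition_mults (Suc N) k n"
    by (auto simp: partition_mults_def upd)
  show "(\<lambda>js. (js (Suc N), js(Suc N := 0))) ` partition_mults (Suc N) k n
      \<subseteq> (SIGMA r:{r\<in>{..k}. Suc N * r \<le> n}. partition_mults N (k - r) (n - Suc N * r))"
    by (auto simp: partition_mults_def upd)
qed (auto simp: partition_mults_def fun_eq_iff)

lemma coeff_series_nth: "coeff_series N y $ j = (if 1 \<le> j \<and> j \<le> N then y j else 0)"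
  unfolding coeff_series_def fps_sum_nth by (simp add: fps_X_power_nth if_distrib cong: if_cong)

lemma monomial_binomial_term_nth:
  fixes Q :: "'a::comm_ring_1 fps"
  shows "(of_nat (k choose r) * (fps_const c * fps_X ^ m) ^ r * Q ^ (k - r)) $ n
    = of_nat (k choose r) * c ^ r * (if n < m * r then 0 else (Q ^ (k - r)) $ (n - m * r))"
proof -
  have "of_nat (k choose r) * (fps_const c * fps_X ^ m) ^ r * Q ^ (k - r)
      = fps_const (of_nat (k choose r) * c ^ r) * (fps_X ^ (m * r) * Q ^ (k - r))"
    by (simp only: power_mult_distrib fps_const_power power_mult[symmetric]
        fps_const_mult[symmetric] fps_of_nat mult.assoc)
  then show ?thesis
    by (simp only: fps_mult_left_const_nth fps_X_power_mult_nth)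
qed

lemma multinomial_coeff_series:
  fixes y :: "nat \<Rightarrow> 'a::field_char_0"
  shows "(\<Sum>js\<in>partition_mults N k n. \<Prod>m=1..N. y m ^ js m / fact (js m))
    = (coeff_series N y ^ k) $ n / fact k"
proof (induction N arbitrary: k n)
  case 0
  show ?case by (cases k) (simp_all add: partition_mults_0 coeff_series_def)
next
  case (Suc N)
  let ?c = "y (Suc N)" and ?Q = "coeff_series N y"
  let ?A = "{r\<in>{..k}. Suc N * r \<le> n}"
  let ?term = "\<lambda>N js. \<Prod>m=1..N. y m ^ js m / fact (js m)"
  have split_last: "?term (Suc N) (js(Suc N := r)) = ?c ^ r / fact r * ?term N js" for js r
  proof -
    have "?term N (js(Suc N := r)) = ?term N js"
      by (rule prod.cong) auto
    then show ?thesis by simp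
  qed
  have "(\<Sum>js\<in>partition_mults (Suc N) k n. ?term (Suc N) js)
      = (\<Sum>(r, js)\<in>(SIGMA r:?A. partition_mults N (k - r) (n - Suc N * r)). ?term (Suc N) (js(Suc N := r)))"
    by (subst sum.reindex_bij_betw[OF bij_betw_partition_mults_Suc, symmetric])
       (simp add: case_prod_beta')
  also have "\<dots> = (\<Sum>r\<in>?A. ?c ^ r / fact r * (\<Sum>js\<in>partition_mults N (k - r) (n - Suc N * r). ?term N js))"
    by (simp add: sum.Sigma[symmetric] finite_partition_mults split_last sum_distrib_left mult_ac)
  also have "\<dots> = (\<Sum>r\<in>?A. ?c ^ r / fact r * ((?Q ^ (k - r)) $ (n - Suc N * r) / fact (k - r)))"
    by (simp only: Suc.IH)
  also have "\<dots> = (\<Sum>r\<le>k. if Suc N * r \<le> n then ?c ^ r / fact r * ((?Q ^ (k - r)) $ (n - Suc N * r) / fact (k - r)) else 0)"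
    by (rule sum.inter_filter) simp
  also have "\<dots> = (\<Sum>r\<le>k. (of_nat (k choose r) * (fps_const ?c * fps_X ^ Suc N) ^ r * ?Q ^ (k - r)) $ n) / fact k"
    unfolding sum_divide_distrib
    by (intro sum.cong refl) (unfold monomial_binomial_term_nth, auto simp: binomial_fact field_simps)
  also have "\<dots> = (coeff_series (Suc N) y ^ k) $ n / fact k"
    by (simp add: coeff_series_def binomial_ring fps_sum_nth add.commute)
  finally show ?case .
qed

lemma fps_power_nth_cong:
  fixes P Q :: "'a::comm_ring_1 fps"
  assumes "P $ 0 = 0" "Q $ 0 = 0" "\<And>j. j \<le> p \<Longrightarrow> P $ j = Q $ j" "n < p + k"
  shows "(P ^ k) $ n = (Q ^ k) $ n"
  using assms(4)
proof (induction k arbitrary: n)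
  case (Suc k)
  have "P $ i * (P ^ k) $ (n - i) = Q $ i * (Q ^ k) $ (n - i)" if "i \<le> n" for i
  proof (cases "i \<le> p")
    case True
    with Suc.prems assms(1) show ?thesis by (cases "i = 0") (auto simp: Suc.IH assms(3))
  next
    case False
    with Suc.prems that have "n - i < k" by auto
    then show ?thesis by (simp add: fps_power_nth_eq_0 assms(1,2))
  qed
  then show ?case by (simp add: fps_mult_nth)
qed simp

lemma inc_bell_eq_bell_poly:
  assumes "l \<le> i"
  shows "inc_bell i l z = bell_poly i l z"
proof -
  let ?y = "\<lambda>m. z m / fact m" and ?N = "i - l + 1"
  have "inc_bell i l z = fact i * (\<Sum>js\<in>partition_mults ?N l i. \<Prod>m=1..?N. ?y m ^ js m / fact (js m))"
    unfolding inc_bell_def bell_seqs_eq_partition_mults sum_distrib_left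
    by (intro sum.cong refl) (simp add: prod_dividef of_nat_prod)
  also have "\<dots> = fact i / fact l * (coeff_series ?N ?y ^ l) $ i"
    unfolding multinomial_coeff_series by simp
  also have "(coeff_series ?N ?y ^ l) $ i = (bell_series z ^ l) $ i"
    by (rule fps_power_nth_cong[of _ _ ?N]) (use assms in \<open>auto simp: coeff_series_nth bell_series_def\<close>)
  finally show ?thesis by (simp add: bell_poly_def)
qed

section \<open>Faa di Bruno's formula\<close>

lemma deriv_compose_eventually:
  assumes "open A" "open S" "f holomorphic_on A" "T holomorphic_on S" "T ` S \<subseteq> A" "z \<in> S"
  shows "eventually (\<lambda>w. deriv (\<lambda>w. f (T w)) w = deriv T w * deriv f (T w)) (nhds z)"
  using eventually_nhds_in_open[OF assms(2,6)]
proof eventually_elim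
  case (elim w)
  have "T field_differentiable at w" "f field_differentiable at (T w)"
    using assms elim holomorphic_on_imp_differentiable_at by blast+
  then show ?case by (simp add: deriv_chain[unfolded o_def] mult.commute)
qed

lemma higher_deriv_compose_bell_poly:
  assumes "open A" "open S" "f holomorphic_on A" "T holomorphic_on S" "T ` S \<subseteq> A" "z \<in> S"
  shows "(deriv ^^ n) (\<lambda>w. f (T w)) z
    = (\<Sum>l\<le>n. (deriv ^^ l) f (T z) * bell_poly n l (\<lambda>m. (deriv ^^ m) T z))"
  using assms(3)
proof (induction n arbitrary: f rule: less_induct)
  case (less n)
  let ?x = "\<lambda>m. (deriv ^^ m) T z"
  show ?case
  proof (cases n)
    case 0
    then show ?thesis by (simp add: bell_poly_0_right)
  next
    case (Suc n')
    have f'_hol: "deriv f holomorphic_on A"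
      using less.prems assms(1) by (rule holomorphic_deriv)
    have f'T_hol: "(\<lambda>w. deriv f (T w)) holomorphic_on S"
      using holomorphic_on_compose_gen[OF assms(4) f'_hol assms(5)] by (simp add: o_def)
    have T'_hol: "deriv T holomorphic_on S"
      using assms(4,2) by (rule holomorphic_deriv)
    have IH: "(deriv ^^ i) (\<lambda>w. deriv f (T w)) z
        = (\<Sum>l\<le>n'. (deriv ^^ Suc l) f (T z) * bell_poly i l ?x)" if "i \<le> n'" for i
    proof -
      have "(deriv ^^ i) (\<lambda>w. deriv f (T w)) z = (\<Sum>l\<le>i. (deriv ^^ l) (deriv f) (T z) * bell_poly i l ?x)"
        using Suc that f'_hol by (intro less.IH) auto
      also have "\<dots> = (\<Sum>l\<le>n'. (deriv ^^ Suc l) f (T z) * bell_poly i l ?x)"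
        unfolding funpow_Suc_right comp_apply
        by (rule sum.mono_neutral_left) (use that in \<open>auto simp: bell_poly_eq_0\<close>)
      finally show ?thesis .
    qed
    have "(deriv ^^ n) (\<lambda>w. f (T w)) z = (deriv ^^ n') (\<lambda>w. deriv T w * deriv f (T w)) z"
      unfolding Suc funpow_Suc_right comp_apply
      by (rule higher_deriv_cong_ev[OF deriv_compose_eventually[OF assms(1,2) less.prems assms(4-6)] refl])
    also have "\<dots> = (\<Sum>i\<le>n'. of_nat (n' choose i) * ?x (Suc i) * (deriv ^^ (n' - i)) (\<lambda>w. deriv f (T w)) z)"
      by (simp only: higher_deriv_mult[OF T'_hol f'T_hol assms(2,6)] atLeast0AtMost funpow_Suc_right comp_apply)
    also have "\<dots> = (\<Sum>i\<le>n'. of_nat (n' choose i) * ?x (Suc i) *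
        (\<Sum>l\<le>n'. (deriv ^^ Suc l) f (T z) * bell_poly (n' - i) l ?x))"
      by (simp add: IH)
    also have "\<dots> = (\<Sum>l\<le>n'. (deriv ^^ Suc l) f (T z) * bell_poly (Suc n') (Suc l) ?x)"
      unfolding bell_poly_Suc_Suc sum_distrib_left sum_distrib_right
      by (subst sum.swap) (simp add: algebra_simps)
    also have "\<dots> = (\<Sum>l\<le>n. (deriv ^^ l) f (T z) * bell_poly n l ?x)"
      unfolding Suc sum.atMost_Suc_shift by (simp add: bell_poly_0_right)
    finally show ?thesis .
  qed
qed

definition comp_mult_coeff ::
    "(complex \<Rightarrow> complex) \<Rightarrow> (complex \<Rightarrow> complex) \<Rightarrow> nat \<Rightarrow> nat \<Rightarrow> complex \<Rightarrow> complex" where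
  "comp_mult_coeff T h j l z =
    (\<Sum>i\<le>j. of_nat (j choose i) * bell_poly i l (\<lambda>m. (deriv ^^ m) T z) * (deriv ^^ (j - i)) h z)"

lemma higher_deriv_compose_mult:
  assumes "open A" "open S" "f holomorphic_on A" "T holomorphic_on S" "T ` S \<subseteq> A"
    "h holomorphic_on S" "z \<in> S"
  shows "(deriv ^^ j) (\<lambda>w. f (T w) * h w) z = (\<Sum>l\<le>j. (deriv ^^ l) f (T z) * comp_mult_coeff T h j l z)"
proof -
  let ?x = "\<lambda>m. (deriv ^^ m) T z"
  have fT_hol: "(\<lambda>w. f (T w)) holomorphic_on S"
    using holomorphic_on_compose_gen[OF assms(4,3,5)] by (simp add: o_def)
  have fT_deriv: "(deriv ^^ i) (\<lambda>w. f (T w)) z = (\<Sum>l\<le>j. (deriv ^^ l) f (T z) * bell_poly i l ?x)"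
    if "i \<le> j" for i
    unfolding higher_deriv_compose_bell_poly[OF assms(1-5,7)]
    by (rule sum.mono_neutral_left) (use that in \<open>auto simp: bell_poly_eq_0\<close>)
  have "(deriv ^^ j) (\<lambda>w. f (T w) * h w) z =
      (\<Sum>i\<le>j. of_nat (j choose i) * (\<Sum>l\<le>j. (deriv ^^ l) f (T z) * bell_poly i l ?x) * (deriv ^^ (j - i)) h z)"
    by (simp add: higher_deriv_mult[OF fT_hol assms(6,2,7)] atLeast0AtMost fT_deriv)
  also have "\<dots> = (\<Sum>l\<le>j. (deriv ^^ l) f (T z) * comp_mult_coeff T h j l z)"
    unfolding comp_mult_coeff_def sum_distrib_left sum_distrib_right
    by (subst sum.swap) (simp add: algebra_simps)
  finally show ?thesis .
qed

lemma comp_mult_coeff_eq_0: "j < l \<Longrightarrow> comp_mult_coeff T h j l z = 0"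
  unfolding comp_mult_coeff_def by (intro sum.neutral) (auto simp: bell_poly_eq_0)

lemma comp_mult_coeff_eq_sum:
  "comp_mult_coeff T h j l z =
    (\<Sum>i=l..j. of_nat (j choose i) * bell_poly i l (\<lambda>m. (deriv ^^ m) T z) * (deriv ^^ (j - i)) h z)"
  unfolding comp_mult_coeff_def by (rule sum.mono_neutral_right) (auto simp: bell_poly_eq_0)

lemma comp_mult_coeff_self: "comp_mult_coeff T h l l z = deriv T z ^ l * h z"
  by (simp add: comp_mult_coeff_eq_sum bell_poly_diag)

lemma comp_mult_coeff_0_right: "comp_mult_coeff T h j 0 z = (deriv ^^ j) h z"
  unfolding comp_mult_coeff_def
  by (subst sum.mono_neutral_right[of "{..j}" "{0}"]) (auto simp: bell_poly_0_right)

lemma comp_mult_coeff_Suc_left_self: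
  "comp_mult_coeff T h (Suc (Suc n)) (Suc n) z =
    of_nat (Suc (Suc n)) * deriv T z ^ Suc n * deriv h z
    + of_nat (Suc (Suc n) choose 2) * deriv T z ^ n * (deriv ^^ 2) T z * h z"
  by (simp add: comp_mult_coeff_eq_sum bell_poly_diag bell_poly_Suc_left_self numeral_2_eq_2)

lemma holomorphic_on_comp_mult_coeff:
  assumes "open S" "T holomorphic_on S" "h holomorphic_on S"
  shows "(\<lambda>z. comp_mult_coeff T h j l z) holomorphic_on S"
  unfolding comp_mult_coeff_def
  by (intro holomorphic_intros holomorphic_on_bell_poly holomorphic_higher_deriv assms)

lemma comp_mult_coeff_divide:
  "comp_mult_coeff T h j l z / (deriv T z ^ l * h z) =
    (\<Sum>i=l..j. of_nat (j choose i)
       * (inc_bell i l (\<lambda>m. (deriv ^^ m) T z) / deriv T z ^ l)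
       * ((deriv ^^ (j - i)) h z / h z))"
  unfolding comp_mult_coeff_eq_sum sum_divide_distrib
  by (intro sum.cong refl) (simp add: inc_bell_eq_bell_poly)

section \<open>Transforming the equation\<close>

function back_subst :: "(nat \<Rightarrow> 'a::field) \<Rightarrow> (nat \<Rightarrow> nat \<Rightarrow> 'a) \<Rightarrow> nat \<Rightarrow> nat \<Rightarrow> 'a" where
  "back_subst R M K l =
    (if K < l then 0 else (R l - (\<Sum>j\<in>{l<..K}. back_subst R M K j * M j l)) / M l l)"
  by pat_completeness auto
termination by (relation "Wellfounded.measure (\<lambda>(R, M, K, l). K - l)") auto

declare back_subst.simps [simp del]

lemma back_subst_solves:
  assumes "l \<le> K" "M l l \<noteq> 0"
  shows "(\<Sum>j=l..K. back_subst R M K j * M j l) = R l"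
proof -
  have "{l..K} = insert l {l<..K}" using assms(1) by auto
  then show ?thesis
    using assms by (simp add: back_subst.simps[of R M K l])
qed

lemma holomorphic_on_back_subst:
  assumes "\<And>l. l \<le> K \<Longrightarrow> (\<lambda>z. R z l) holomorphic_on S"
    and "\<And>j l. (\<lambda>z. M z j l) holomorphic_on S"
    and "\<And>z l. z \<in> S \<Longrightarrow> M z l l \<noteq> 0"
  shows "(\<lambda>z. back_subst (R z) (M z) K l) holomorphic_on S"
proof (induction "K - l" arbitrary: l rule: less_induct)
  case less
  show ?case
  proof (cases "K < l")
    case True
    then show ?thesis by (simp add: back_subst.simps)
  next
    case False
    have IH: "(\<lambda>z. back_subst (R z) (M z) K j) holomorphic_on S" if "j \<in> {l<..K}" for j
      using that by (intro less) auto
    from False show ?thesis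
      by (subst back_subst.simps)
        (auto intro!: holomorphic_on_divide holomorphic_intros assms(1,2) IH simp: assms(3))
  qed
qed

locale conformal_ode_transfer =
  fixes k :: nat and \<Omega>1 \<Omega>2 :: "complex set" and T h :: "complex \<Rightarrow> complex"
    and a :: "nat \<Rightarrow> complex \<Rightarrow> complex"
  assumes order_ge_2: "k \<ge> 2"
    and open_\<Omega>1: "open \<Omega>1" and open_\<Omega>2: "open \<Omega>2"
    and T_holo: "T holomorphic_on \<Omega>2" and T_inj: "inj_on T \<Omega>2" and T_image: "T ` \<Omega>2 = \<Omega>1"
    and h_holo: "h holomorphic_on \<Omega>2"
    and h_branch: "\<forall>z\<in>\<Omega>2. h z ^ 2 * deriv T z ^ (k - 1) = 1"
    and a_holo: "\<forall>j\<le>k-2. a j holomorphic_on \<Omega>1"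
begin

definition b :: "nat \<Rightarrow> complex \<Rightarrow> complex" where
  "b j z = back_subst (\<lambda>l. a l (T z) * deriv T z ^ k * h z - comp_mult_coeff T h k l z)
     (\<lambda>j l. comp_mult_coeff T h j l z) (k - 2) j"

lemma order_eq: "k = Suc (Suc (k - 2))"
  using order_ge_2 by simp

lemma T_maps: "T ` \<Omega>2 \<subseteq> \<Omega>1"
  by (simp add: T_image)

lemma deriv_T_nonzero: "z \<in> \<Omega>2 \<Longrightarrow> deriv T z \<noteq> 0"
  using h_branch order_ge_2 by (auto simp: power_0_left)

lemma h_nonzero: "z \<in> \<Omega>2 \<Longrightarrow> h z \<noteq> 0"
  using h_branch by fastforce

lemma b_holomorphic: "b j holomorphic_on \<Omega>2"
proof -
  have "(\<lambda>z. a l (T z)) holomorphic_on \<Omega>2" if "l \<le> k - 2" for l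
    using holomorphic_on_compose_gen[OF T_holo _ T_maps, of "a l"] a_holo that by (simp add: o_def)
  then show ?thesis
    unfolding b_def[abs_def]
    by (intro holomorphic_on_back_subst holomorphic_intros holomorphic_on_comp_mult_coeff
        holomorphic_deriv open_\<Omega>2 T_holo h_holo)
       (simp_all add: comp_mult_coeff_self deriv_T_nonzero h_nonzero)
qed

lemma sum_b_comp_mult_coeff:
  assumes "z \<in> \<Omega>2" "l \<le> k - 2"
  shows "(\<Sum>j=l..k-2. b j z * comp_mult_coeff T h j l z)
    = a l (T z) * deriv T z ^ k * h z - comp_mult_coeff T h k l z"
  unfolding b_def
  by (rule back_subst_solves) (use assms in \<open>simp_all add: comp_mult_coeff_self deriv_T_nonzero h_nonzero\<close>)

lemma h_deriv_relation:
  assumes z: "z \<in> \<Omega>2"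
  shows "2 * deriv h z * deriv T z + of_nat (k - 1) * h z * (deriv ^^ 2) T z = 0"
proof -
  obtain n where k: "k = Suc (Suc n)" using order_eq by blast
  have T'_holo: "deriv T holomorphic_on \<Omega>2"
    using T_holo open_\<Omega>2 by (rule holomorphic_deriv)
  have "((\<lambda>w. h w ^ 2 * deriv T w ^ Suc n) has_field_derivative
      of_nat 2 * (deriv h z * h z ^ 1) * deriv T z ^ Suc n
      + of_nat (Suc n) * ((deriv ^^ 2) T z * deriv T z ^ n) * h z ^ 2) (at z)"
    using DERIV_mult[OF DERIV_power[OF holomorphic_derivI[OF h_holo open_\<Omega>2 z]]
        DERIV_power[OF holomorphic_derivI[OF T'_holo open_\<Omega>2 z]], of 2 "Suc n"]
    by (simp add: numeral_2_eq_2)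
  moreover have "((\<lambda>w. h w ^ 2 * deriv T w ^ Suc n) has_field_derivative 0) (at z)"
    by (rule has_field_derivative_transform_within_open[OF DERIV_const open_\<Omega>2 z])
       (use h_branch k in auto)
  ultimately have "h z * deriv T z ^ n * (2 * deriv h z * deriv T z + of_nat (Suc n) * h z * (deriv ^^ 2) T z) = 0"
    by (auto dest: DERIV_unique simp: algebra_simps power2_eq_square)
  then show ?thesis
    using h_nonzero[OF z] deriv_T_nonzero[OF z] k by simp
qed

lemma comp_mult_coeff_subdiag_eq_0:
  assumes "z \<in> \<Omega>2"
  shows "comp_mult_coeff T h k (k - 1) z = 0"
proof -
  obtain n where k: "k = Suc (Suc n)" using order_eq by blast
  let ?K = "of_nat (Suc (Suc n)) :: complex"
  have "2 * (Suc (Suc n) choose 2) = Suc (Suc n) * Suc n"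
    by (induction n) (simp_all add: numeral_2_eq_2)
  then have two: "2 * of_nat (Suc (Suc n) choose 2) = ?K * of_nat (Suc n)"
    by (metis of_nat_mult of_nat_numeral)
  have "2 * comp_mult_coeff T h k (k - 1) z
      = ?K * deriv T z ^ n * (2 * deriv h z * deriv T z)
        + (2 * of_nat (Suc (Suc n) choose 2)) * deriv T z ^ n * (deriv ^^ 2) T z * h z"
    unfolding k by (simp add: comp_mult_coeff_Suc_left_self algebra_simps del: of_nat_Suc)
  also have "\<dots> = ?K * deriv T z ^ n
      * (2 * deriv h z * deriv T z + of_nat (k - 1) * h z * (deriv ^^ 2) T z)"
    unfolding two k by (simp add: algebra_simps del: of_nat_Suc)
  finally show ?thesis
    using h_deriv_relation[OF assms] by simp
qed

lemma transformed_coeff: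
  assumes z: "z \<in> \<Omega>2" and "l \<le> k"
  shows "comp_mult_coeff T h k l z + (\<Sum>j<k-1. b j z * comp_mult_coeff T h j l z)
    = deriv T z ^ k * h z * (if l < k - 1 then a l (T z) else if l = k then 1 else 0)"
proof (cases "l < k - 1")
  case True
  have "(\<Sum>j<k-1. b j z * comp_mult_coeff T h j l z) = (\<Sum>j=l..k-2. b j z * comp_mult_coeff T h j l z)"
    by (rule sum.mono_neutral_right) (use True in \<open>auto simp: comp_mult_coeff_eq_0\<close>)
  with True show ?thesis
    using sum_b_comp_mult_coeff[OF z, of l] by simp
next
  case False
  then have "(\<Sum>j<k-1. b j z * comp_mult_coeff T h j l z) = 0"
    by (intro sum.neutral) (auto simp: comp_mult_coeff_eq_0)
  moreover have "l = k - 1 \<or> l = k"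
    using False \<open>l \<le> k\<close> by auto
  ultimately show ?thesis
    using False order_ge_2 comp_mult_coeff_subdiag_eq_0[OF z] by (auto simp: comp_mult_coeff_self)
qed

lemma transformed_ode:
  assumes g: "g holomorphic_on \<Omega>1" and z: "z \<in> \<Omega>2"
  shows "(deriv ^^ k) (\<lambda>w. g (T w) * h w) z + (\<Sum>j<k-1. b j z * (deriv ^^ j) (\<lambda>w. g (T w) * h w) z)
    = deriv T z ^ k * h z * ((deriv ^^ k) g (T z) + (\<Sum>j<k-1. a j (T z) * (deriv ^^ j) g (T z)))"
proof -
  let ?F = "\<lambda>l. (deriv ^^ l) g (T z)" and ?C = "\<lambda>j l. comp_mult_coeff T h j l z"
  let ?e = "\<lambda>l. if l < k - 1 then a l (T z) else if l = k then 1 else 0"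
  have expand: "(deriv ^^ j) (\<lambda>w. g (T w) * h w) z = (\<Sum>l\<le>k. ?F l * ?C j l)" if "j \<le> k" for j
    unfolding higher_deriv_compose_mult[OF open_\<Omega>1 open_\<Omega>2 g T_holo T_maps h_holo z]
    by (rule sum.mono_neutral_left) (use that in \<open>auto simp: comp_mult_coeff_eq_0\<close>)
  have "(deriv ^^ k) (\<lambda>w. g (T w) * h w) z + (\<Sum>j<k-1. b j z * (deriv ^^ j) (\<lambda>w. g (T w) * h w) z)
      = (\<Sum>l\<le>k. ?F l * ?C k l) + (\<Sum>j<k-1. b j z * (\<Sum>l\<le>k. ?F l * ?C j l))"
    by (simp add: expand)
  also have "\<dots> = (\<Sum>l\<le>k. ?F l * (?C k l + (\<Sum>j<k-1. b j z * ?C j l)))"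
    unfolding sum_distrib_left distrib_left sum.distrib by (subst (2) sum.swap) (simp add: algebra_simps)
  also have "\<dots> = (\<Sum>l\<le>k. ?F l * (deriv T z ^ k * h z * ?e l))"
    by (intro sum.cong refl) (simp only: transformed_coeff[OF z] atMost_iff)
  also have "\<dots> = deriv T z ^ k * h z * (\<Sum>l\<le>k. ?F l * ?e l)"
    by (simp add: sum_distrib_left mult_ac)
  also have "(\<Sum>l\<le>k. ?F l * ?e l) = ?F k + (\<Sum>j<k-1. a j (T z) * ?F j)"
  proof -
    obtain n where k: "k = Suc (Suc n)"
      using order_eq by blast
    have "(\<Sum>l<k-1. ?F l * ?e l) = (\<Sum>l<k-1. a l (T z) * ?F l)"
      by (intro sum.cong) auto
    then show ?thesis
      unfolding k by (simp add: lessThan_Suc_atMost)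
  qed
  finally show ?thesis .
qed

lemma solves_ode_transform:
  assumes "solves_ode \<Omega>1 k a g"
  shows "solves_ode \<Omega>2 k b (\<lambda>z. g (T z) * h z)"
proof -
  have g: "g holomorphic_on \<Omega>1"
    using assms by (simp add: solves_ode_def)
  have "(\<lambda>z. g (T z) * h z) holomorphic_on \<Omega>2"
    using holomorphic_on_compose_gen[OF T_holo g T_maps] h_holo by (intro holomorphic_intros) (simp_all add: o_def)
  moreover have "(deriv ^^ k) (\<lambda>w. g (T w) * h w) z
      + (\<Sum>j<k-1. b j z * (deriv ^^ j) (\<lambda>w. g (T w) * h w) z) = 0" if "z \<in> \<Omega>2" for z
  proof -
    have "(deriv ^^ k) g (T z) + (\<Sum>j<k-1. a j (T z) * (deriv ^^ j) g (T z)) = 0"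
      using assms T_maps that by (auto simp: solves_ode_def)
    then show ?thesis
      unfolding transformed_ode[OF g that] by simp
  qed
  ultimately show ?thesis
    by (simp add: solves_ode_def)
qed

lemma solves_ode_transform_inverse:
  assumes G: "solves_ode \<Omega>2 k b G"
  obtains g where "solves_ode \<Omega>1 k a g" "\<And>z. z \<in> \<Omega>2 \<Longrightarrow> G z = g (T z) * h z"
proof -
  obtain Ti where Ti_holo: "Ti holomorphic_on \<Omega>1" and Ti: "\<And>z. z \<in> \<Omega>2 \<Longrightarrow> Ti (T z) = z"
    using holomorphic_has_inverse[OF T_holo open_\<Omega>2 T_inj] T_image by metis
  have Ti_maps: "Ti ` \<Omega>1 \<subseteq> \<Omega>2"
    using T_image Ti by auto
  define g where "g w = G (Ti w) / h (Ti w)" for w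
  have G_holo: "G holomorphic_on \<Omega>2"
    using G by (simp add: solves_ode_def)
  have g_holo: "g holomorphic_on \<Omega>1"
    unfolding g_def using Ti_maps h_nonzero
    by (intro holomorphic_on_divide holomorphic_on_compose_gen[OF Ti_holo _ Ti_maps, unfolded o_def]
        G_holo h_holo) auto
  have gT: "G z = g (T z) * h z" if "z \<in> \<Omega>2" for z
    using that by (simp add: g_def Ti h_nonzero)
  have "(deriv ^^ k) g w + (\<Sum>j<k-1. a j w * (deriv ^^ j) g w) = 0" if "w \<in> \<Omega>1" for w
  proof -
    obtain z where z: "z \<in> \<Omega>2" "w = T z"
      using \<open>w \<in> \<Omega>1\<close> T_image by auto
    have derivs: "(deriv ^^ j) G z = (deriv ^^ j) (\<lambda>w. g (T w) * h w) z" for j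
      using eventually_nhds_in_open[OF open_\<Omega>2 z(1)]
      by (intro higher_deriv_cong_ev) (auto elim!: eventually_mono simp: gT)
    have "(deriv ^^ k) G z + (\<Sum>j<k-1. b j z * (deriv ^^ j) G z) = 0"
      using G z(1) by (simp add: solves_ode_def)
    then have "deriv T z ^ k * h z * ((deriv ^^ k) g (T z) + (\<Sum>j<k-1. a j (T z) * (deriv ^^ j) g (T z))) = 0"
      unfolding derivs transformed_ode[OF g_holo z(1)] .
    then show ?thesis
      using deriv_T_nonzero[OF z(1)] h_nonzero[OF z(1)] z(2) by simp
  qed
  with g_holo have "solves_ode \<Omega>1 k a g"
    by (simp add: solves_ode_def)
  then show thesis using gT by (rule that)
qed

lemma solution_base_transform:
  assumes "solution_base \<Omega>1 k a f"
  shows "solution_base \<Omega>2 k b (\<lambda>m z. f m (T z) * h z)"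
  unfolding solution_base_def
proof (intro conjI allI impI)
  show "\<forall>m\<in>{1..k}. solves_ode \<Omega>2 k b (\<lambda>z. f m (T z) * h z)"
    using assms solves_ode_transform by (simp add: solution_base_def)
next
  fix c :: "nat \<Rightarrow> complex"
  assume "\<forall>z\<in>\<Omega>2. (\<Sum>m=1..k. c m * (f m (T z) * h z)) = 0"
  then have "\<forall>z\<in>\<Omega>2. (\<Sum>m=1..k. c m * f m (T z)) * h z = 0"
    by (simp add: sum_distrib_right mult.assoc)
  then have "\<forall>w\<in>\<Omega>1. (\<Sum>m=1..k. c m * f m w) = 0"
    using T_image h_nonzero by auto
  then show "\<forall>m\<in>{1..k}. c m = 0"
    using assms by (simp add: solution_base_def)
next
  fix G
  assume "solves_ode \<Omega>2 k b G"
  then obtain g where g: "solves_ode \<Omega>1 k a g" and G: "\<And>z. z \<in> \<Omega>2 \<Longrightarrow> G z = g (T z) * h z"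
    by (rule solves_ode_transform_inverse) auto
  obtain c where "\<forall>w\<in>\<Omega>1. g w = (\<Sum>m=1..k. c m * f m w)"
    using assms g unfolding solution_base_def by blast
  then have "\<forall>z\<in>\<Omega>2. G z = (\<Sum>m=1..k. c m * (f m (T z) * h z))"
    using G T_maps by (auto simp: sum_distrib_right mult.assoc)
  then show "\<exists>c. \<forall>z\<in>\<Omega>2. G z = (\<Sum>m=1..k. c m * (f m (T z) * h z))"
    by blast
qed


lemma coefficient_identity:
  assumes l: "l \<in> {1..k-2}" and z: "z \<in> \<Omega>2"
  shows "a l (T z) * deriv T z ^ (k - l) =
      (\<Sum>j=l..k-1. (if j = k - 1 then 0 else b j z) *
         (\<Sum>i=l..j. of_nat (j choose i)
            * (inc_bell i l (\<lambda>m. (deriv ^^ m) T z) / deriv T z ^ l)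
            * ((deriv ^^ (j - i)) h z / h z)))
    + (\<Sum>i=l..k-1. of_nat (k choose i)
            * (inc_bell i l (\<lambda>m. (deriv ^^ m) T z) / deriv T z ^ l)
            * ((deriv ^^ (k - i)) h z / h z))
    + inc_bell k l (\<lambda>m. (deriv ^^ m) T z) / deriv T z ^ l"
proof -
  let ?P = "deriv T z ^ l * h z" and ?C = "\<lambda>j. comp_mult_coeff T h j l z"
  let ?G = "\<lambda>j i. of_nat (j choose i) * (inc_bell i l (\<lambda>m. (deriv ^^ m) T z) / deriv T z ^ l)
    * ((deriv ^^ (j - i)) h z / h z)"
  have k: "k - 1 = Suc (k - 2)" "l \<le> k - 2"
    using l order_ge_2 by auto
  have "(\<Sum>j=l..k-1. (if j = k - 1 then 0 else b j z) * (\<Sum>i=l..j. ?G j i))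
      = (\<Sum>j=l..k-2. b j z * ?C j) / ?P"
    unfolding comp_mult_coeff_divide[symmetric] k(1) sum_divide_distrib
    using k by (simp add: sum.cl_ivl_Suc)
  also have "\<dots> = (a l (T z) * deriv T z ^ k * h z - ?C k) / ?P"
    using sum_b_comp_mult_coeff[OF z k(2)] by simp
  finally have lower: "(\<Sum>j=l..k-1. (if j = k - 1 then 0 else b j z) * (\<Sum>i=l..j. ?G j i))
      = (a l (T z) * deriv T z ^ k * h z - ?C k) / ?P" .
  have split_top: "{l..k} = insert k {l..k-1}"
    using k by auto
  have "?C k / ?P = ?G k k + (\<Sum>i=l..k-1. ?G k i)"
    unfolding comp_mult_coeff_divide split_top using order_ge_2 by (subst sum.insert) auto
  then have top: "(\<Sum>i=l..k-1. ?G k i) + inc_bell k l (\<lambda>m. (deriv ^^ m) T z) / deriv T z ^ l = ?C k / ?P"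
    using h_nonzero[OF z] by (simp add: add.commute)
  have "deriv T z ^ k = deriv T z ^ (k - l) * deriv T z ^ l"
    using k by (simp flip: power_add)
  then show ?thesis
    unfolding add.assoc top lower
    using deriv_T_nonzero[OF z] h_nonzero[OF z] by (simp add: field_simps)
qed

lemma coefficient_identity_0:
  assumes z: "z \<in> \<Omega>2"
  shows "a 0 (T z) * deriv T z ^ k =
    (deriv ^^ k) h z / h z + (\<Sum>j<k-1. b j z * ((deriv ^^ j) h z / h z))"
proof -
  have "(\<Sum>j<k-1. b j z * (deriv ^^ j) h z) = (\<Sum>j=0..k-2. b j z * comp_mult_coeff T h j 0 z)"
    using order_ge_2 by (intro sum.cong) (auto simp: comp_mult_coeff_0_right)
  also have "\<dots> = a 0 (T z) * deriv T z ^ k * h z - (deriv ^^ k) h z"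
    using sum_b_comp_mult_coeff[OF z, of 0] by (simp add: comp_mult_coeff_0_right)
  finally show ?thesis
    using h_nonzero[OF z]
    by (simp add: sum_divide_distrib[symmetric] add_divide_distrib[symmetric] field_simps)
qed

end

theorem theorem1:
  fixes k :: nat
    and \<Omega>1 \<Omega>2 :: "complex set"
    and T h :: "complex \<Rightarrow> complex"
    and a :: "nat \<Rightarrow> complex \<Rightarrow> complex"
    and f :: "nat \<Rightarrow> complex \<Rightarrow> complex"
  assumes k: "k \<ge> 2"
    and dom1: "open \<Omega>1" "connected \<Omega>1"
    and dom2: "open \<Omega>2" "connected \<Omega>2"
    and T_hol: "T holomorphic_on \<Omega>2" and T_inj: "inj_on T \<Omega>2" and T_onto: "T ` \<Omega>2 = \<Omega>1"
    and h_hol: "h holomorphic_on \<Omega>2"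
    and h_branch: "\<forall>z\<in>\<Omega>2. h z ^ 2 * deriv T z ^ (k - 1) = 1"
    and a_hol: "\<forall>j\<le>k-2. a j holomorphic_on \<Omega>1"
    and base: "solution_base \<Omega>1 k a f"
  shows "\<exists>b :: nat \<Rightarrow> complex \<Rightarrow> complex.
     (\<forall>j\<le>k-2. b j holomorphic_on \<Omega>2) \<and>
     solution_base \<Omega>2 k b (\<lambda>m z. f m (T z) * h z) \<and>
     (\<forall>l\<in>{1..k-2}. \<forall>z\<in>\<Omega>2.
        a l (T z) * deriv T z ^ (k - l) =
          (\<Sum>j=l..k-1. (if j = k - 1 then 0 else b j z) *
             (\<Sum>i=l..j. of_nat (j choose i)
                * (inc_bell i l (\<lambda>m. (deriv ^^ m) T z) / deriv T z ^ l)
                * ((deriv ^^ (j - i)) h z / h z)))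
        + (\<Sum>i=l..k-1. of_nat (k choose i)
                * (inc_bell i l (\<lambda>m. (deriv ^^ m) T z) / deriv T z ^ l)
                * ((deriv ^^ (k - i)) h z / h z))
        + inc_bell k l (\<lambda>m. (deriv ^^ m) T z) / deriv T z ^ l) \<and>
     (\<forall>z\<in>\<Omega>2. a 0 (T z) * deriv T z ^ k =
        (deriv ^^ k) h z / h z + (\<Sum>j<k-1. b j z * ((deriv ^^ j) h z / h z)))"
proof -
  interpret conformal_ode_transfer k \<Omega>1 \<Omega>2 T h a
    using k dom1(1) dom2(1) T_hol T_inj T_onto h_hol h_branch a_hol by unfold_locales
  show ?thesis
    using b_holomorphic solution_base_transform[OF base] coefficient_identity coefficient_identity_0
    by blast
qed

end
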